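(* Let $\gamma>0$, $\delta\ge0$, $s\in(0,1]$, and let $H(u;\gamma,\delta)=C(\delta,\gamma)(1+u)^{-1-\delta}\{1+\log(1+u)\}^{-1-\gamma}$, $u>0$, where $C(\delta,\gamma)$ is the normalizing constant. Define $f_0(z)=\phi(z;0,1)$, $f_1(z)=\int_0^\infty\phi(z;0,u)H(u;\gamma,\delta)\,du$ and $f(z)=(1-s)f_0(z)+sf_1(z)$, $z\in\mathbb{R}$, where $\phi(\cdot;0,u)$ is the $N(0,u)$ density. Let $x_1,\dots,x_n\in\mathbb{R}^p$ be fixed, let $\pi(\beta,\sigma)$ be a prior density on $\mathbb{R}^p\times(0,\infty)$, and for a data set $\mathcal{D}=\{y_1,\dots,y_n\}$ define the unnormalized posterior $$\tilde\pi_\delta(\beta,\sigma\mid\mathcal{D})=\pi(\beta,\sigma)\prod_{i=1}^n\Big\{\frac1\sigma f\Big(\frac{y_i-x_i^t\beta}{\sigma}\Big)\Big\},$$ and $\tilde\pi_\delta(\beta,\sigma\mid\mathcal{D}^* )$ the analogous product over $i\in\mathcal{K}$ only, where $\mathcal{D}^*=\{y_i:i\in\mathcal{K}\}$. Let $\{1,\dots,n\}=\mathcal{K}\cup\mathcal{L}$ be a disjoint partition and suppose $y_i=y_i(\omega)$ depends on a parameter $\omega$ such that $y_i(\omega)$ is constant for $i\in\mathcal{K}$ and $|y_i(\omega)|\to\infty$ as $\omega\to\infty$ for $i\in\mathcal{L}$. Then for any compact set $K\subset\mathbb{R}^p\times(0,\infty)$, $$\frac{\tilde\pi_\delta(\beta,\sigma\mid\mathcal{D})}{\tilde\pi_\delta(\beta,\sigma\mid\mathcal{D}^*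 )}\Big/\prod_{i\in\mathcal{L}}f(y_i)\ \longrightarrow\ \sigma^{2|\mathcal{L}|\delta}$$ uniformly in $(\beta,\sigma)\in K$ as $\omega\to\infty$. In particular, the unnormalized posterior is robust (the limit equals $1$) if and only if $\delta=0$.
   Context: The ratio of unnormalized posteriors equals $\prod_{i\in\mathcal{L}}\frac1\sigma f((y_i-x_i^t\beta)/\sigma)$, and the prior density is assumed positive so that the ratio is defined. *)

theory Defs
  imports "HOL-Analysis.Analysis"
begin

definition normal_dens :: "real \<Rightarrow> real \<Rightarrow> real" where
  "normal_dens z u = exp (- (z^2) / (2 * u)) / sqrt (2 * pi * u)"

definition H_unnorm :: "real \<Rightarrow> real \<Rightarrow> real \<Rightarrow> real" where
  "H_unnorm gam del u = (1 + u) powr (- 1 - del) * (1 + ln (1 + u)) powr (- 1 - gam)"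

definition C_norm :: "real \<Rightarrow> real \<Rightarrow> real" where
  "C_norm del gam = 1 / (LBINT u:{0<..}. H_unnorm gam del u)"

definition H_dens :: "real \<Rightarrow> real \<Rightarrow> real \<Rightarrow> real" where
  "H_dens gam del u = C_norm del gam * H_unnorm gam del u"

definition f0 :: "real \<Rightarrow> real" where
  "f0 z = normal_dens z 1"

definition f1 :: "real \<Rightarrow> real \<Rightarrow> real \<Rightarrow> real" where
  "f1 gam del z = (LBINT u:{0<..}. normal_dens z u * H_dens gam del u)"

definition fmix :: "real \<Rightarrow> real \<Rightarrow> real \<Rightarrow> real \<Rightarrow> real" where
  "fmix s gam del z = (1 - s) * f0 z + s * f1 gam del z"

definition upost ::
  "('p::finite) itself \<Rightarrow> (real \<Rightarrow> real) \<Rightarrow> (real^'p \<Rightarrow> real \<Rightarrow> real) \<Rightarrow> (nat \<Rightarrow> real^'p)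
    \<Rightarrow> (nat \<Rightarrow> real) \<Rightarrow> nat set \<Rightarrow> real^'p \<Rightarrow> real \<Rightarrow> real" where
  "upost _ f prior x y I \<beta> \<sigma> = prior \<beta> \<sigma> * (\<Prod>i\<in>I. (1 / \<sigma>) * f ((y i - x i \<bullet> \<beta>) / \<sigma>))"

end

theory Submission
  imports Defs "HOL-Real_Asymp.Real_Asymp"
begin

text \<open>
  Substituting \<open>u = r\<^sup>2 t\<close> in the integral defining \<open>f1\<close> and applying dominated convergence
  shows that \<open>f1 r\<close> behaves like \<open>\<kappa> |r| powr (-1 - 2\<delta>) (1 + ln (1 + r\<^sup>2)) powr (-1 - \<gamma>)\<close>
  with \<open>\<kappa> > 0\<close>; the Gaussian part \<open>f0\<close> is negligible against this, so the same holds for the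
  mixture \<open>f\<close>. If \<open>|y| \<rightarrow> \<infinity>\<close> and \<open>(\<beta>, \<sigma>)\<close> ranges over a compact set, then
  \<open>(y - x\<^sup>t\<beta>) / \<sigma>\<close> is comparable to \<open>y\<close>, so the logarithmic factors agree asymptotically
  and \<open>(1/\<sigma>) f ((y - x\<^sup>t\<beta>) / \<sigma>) / f y \<rightarrow> \<sigma> powr (2\<delta>)\<close> uniformly. The factors indexed
  by \<open>KI\<close> cancel in the posterior ratio, leaving a product of \<open>|LI|\<close> such quotients.
\<close>

section \<open>Integrability and positivity of the mixture density\<close>

lemma set_integrable_lborel_nonneg:
  fixes f :: "real \<Rightarrow> real"
  assumes "f integrable_on A" "\<And>x. x \<in> A \<Longrightarrow> 0 \<le> f x"
    and [measurable]: "A \<in> sets borel" "f \<in> borel_measurable borel"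
  shows "set_integrable lborel A f"
proof -
  have "set_integrable lebesgue A f"
    using nonnegative_absolutely_integrable_1[OF assms(1,2)] by simp
  then show ?thesis
    unfolding set_integrable_def by (subst (asm) integrable_completion) auto
qed

lemma powr_set_integrable_Ioc:
  "a > -1 \<Longrightarrow> set_integrable lborel {0<..c} (\<lambda>x::real. x powr a)"
proof (cases "c > 0")
  case False
  then have "{0<..c} = {}" by auto
  then show ?thesis by (simp add: set_integrable_def)
qed (auto intro!: set_integrable_lborel_nonneg integrable_on_powr_from_0')

lemma powr_set_integrable_atLeast:
  "a < -1 \<Longrightarrow> c > 0 \<Longrightarrow> set_integrable lborel {c..} (\<lambda>x::real. x powr a)"
  by (intro set_integrable_lborel_nonneg) (auto dest: has_integral_powr_to_inf simp: integrable_on_def)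

lemma powr_minus_one_diff: "x powr (-1 - e) = 1 / x powr (1 + e)"
  for x e :: real
  using powr_minus_divide[of x "1 + e"] by simp

lemma lborel_integral_pos:
  fixes g :: "real \<Rightarrow> real"
  assumes "integrable lborel g" "\<And>x. 0 \<le> g x" "\<And>x. a < x \<Longrightarrow> x < b \<Longrightarrow> 0 < g x" "a < b"
  shows "integral\<^sup>L lborel g > 0"
proof -
  have "integral\<^sup>L lborel g \<noteq> 0"
  proof
    assume "integral\<^sup>L lborel g = 0"
    then have "AE x in lborel. g x = 0"
      using integral_nonneg_eq_0_iff_AE[OF assms(1)] assms(2) by simp
    then have "AE x in lborel. x \<notin> {a<..<b}"
      by eventually_elim (use assms(3) in force)
    then have "emeasure lborel {a<..<b} = 0"
      by (subst (asm) AE_iff_measurable[of "{a<..<b}"]) auto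
    then show False using \<open>a < b\<close> by simp
  qed
  moreover have "integral\<^sup>L lborel g \<ge> 0"
    using assms(2) by (simp add: integral_nonneg)
  ultimately show ?thesis by simp
qed

lemma log_tail_set_integrable:
  assumes "gam > 0"
  shows "set_integrable lborel {0..} (\<lambda>u::real. (1 + u) powr -1 * (1 + ln (1 + u)) powr (-1 - gam))"
proof -
  define h where "h u = (1 + u) powr -1 * (1 + ln (1 + u)) powr (-1 - gam)" for u :: real
  have "(\<integral>\<^sup>+u. ennreal (h u) * indicator {0..} u \<partial>lborel) = ennreal (0 - (- (1 / gam) * (1 + ln (1 + 0)) powr (-gam)))"
  proof (rule nn_integral_FTC_atLeast)
    fix u :: real assume "0 \<le> u"
    then have "0 < 1 + ln (1 + u)" by (smt (verit) ln_ge_zero)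
    then have "((\<lambda>u. - (1 / gam) * (1 + ln (1 + u)) powr (-gam)) has_real_derivative
        - (1 / gam) * (- gam * (1 + ln (1 + u)) powr (- gam - 1) * (1 / (1 + u)))) (at u)"
      using \<open>0 \<le> u\<close> by (auto intro!: derivative_eq_intros)
    moreover have "- gam - 1 = -1 - gam" by simp
    ultimately show "((\<lambda>u. - (1 / gam) * (1 + ln (1 + u)) powr (-gam)) has_real_derivative h u) (at u)"
      using \<open>0 \<le> u\<close> assms by (simp add: h_def powr_minus_divide field_simps)
  qed (use assms in \<open>unfold h_def, measurable, simp, real_asymp\<close>)
  moreover have "(\<integral>\<^sup>+u. ennreal (indicator {0..} u * h u) \<partial>lborel) = (\<integral>\<^sup>+u. ennreal (h u) * indicator {0..} u \<partial>lborel)"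
    by (intro nn_integral_cong) (simp add: indicator_def)
  ultimately show ?thesis
    unfolding set_integrable_def by (intro integrableI_nonneg) (auto simp: h_def)
qed

lemma H_unnorm_set_integrable:
  assumes "gam > 0" "del \<ge> 0"
  shows "set_integrable lborel {0<..} (H_unnorm gam del)"
proof (rule set_integrable_bound)
  show "set_integrable lborel {0<..} (\<lambda>u::real. (1 + u) powr -1 * (1 + ln (1 + u)) powr (-1 - gam))"
    by (rule set_integrable_subset[OF log_tail_set_integrable[OF assms(1)]]) auto
  have "H_unnorm gam del u \<le> (1 + u) powr -1 * (1 + ln (1 + u)) powr (-1 - gam)" if "u > 0" for u
    unfolding H_unnorm_def using that assms by (intro mult_right_mono powr_mono) auto
  then show "AE u in lborel. u \<in> {0<..} \<longrightarrow>
      norm (H_unnorm gam del u) \<le> norm ((1 + u) powr -1 * (1 + ln (1 + u)) powr (-1 - gam))"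
    by (intro AE_I2) (auto simp: H_unnorm_def)
qed (unfold set_borel_measurable_def H_unnorm_def, measurable)

lemma H_unnorm_pos:
  assumes "u > 0"
  shows "H_unnorm gam del u > 0"
proof -
  have "1 + ln (1 + u) > 0" using assms ln_gt_zero[of "1 + u"] by linarith
  then show ?thesis using assms by (simp add: H_unnorm_def)
qed

lemma H_unnorm_le_1:
  assumes "0 \<le> u" "0 \<le> gam" "0 \<le> del"
  shows "H_unnorm gam del u \<le> 1"
proof -
  have L: "1 \<le> 1 + ln (1 + u)"
    using assms by simp
  have "(1 + ln (1 + u)) powr (-1 - gam) \<le> (1 + ln (1 + u)) powr 0"
    using L assms by (intro powr_mono) auto
  also have "\<dots> = 1"
    using L by simp
  finally have "(1 + ln (1 + u)) powr (-1 - gam) \<le> 1" .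
  moreover have "(1 + u) powr (-1 - del) \<le> 1"
    using powr_mono[of "-1 - del" 0 "1 + u"] assms by simp
  ultimately show ?thesis
    unfolding H_unnorm_def by (intro mult_le_one) auto
qed

lemma C_norm_pos:
  assumes "gam > 0" "del \<ge> 0"
  shows "C_norm del gam > 0"
proof -
  have "integral\<^sup>L lborel (\<lambda>u. indicator {0<..} u * H_unnorm gam del u) > 0"
    using H_unnorm_set_integrable[OF assms]
    by (intro lborel_integral_pos[where a=0 and b=1])
      (auto simp: set_integrable_def indicator_def H_unnorm_pos less_imp_le)
  then show ?thesis
    unfolding C_norm_def set_lebesgue_integral_def by simp
qed

lemma normal_dens_pos: "u > 0 \<Longrightarrow> normal_dens z u > 0"
  by (simp add: normal_dens_def)

lemma normal_dens_le_powr: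
  assumes "u > 0"
  shows "normal_dens z u \<le> u powr (-1/2)"
proof -
  have "sqrt u \<le> sqrt (2 * pi * u)"
    using assms pi_gt3 by (intro real_sqrt_le_mono) auto
  then have "exp (- (z^2) / (2 * u)) / sqrt (2 * pi * u) \<le> 1 / sqrt u"
    using assms by (intro frac_le) auto
  then show ?thesis
    using assms by (simp add: normal_dens_def powr_minus_divide powr_half_sqrt)
qed

lemma f1_integrand_set_integrable:
  assumes "gam > 0" "del \<ge> 0"
  shows "set_integrable lborel {0<..} (\<lambda>u. normal_dens z u * H_dens gam del u)"
  unfolding set_integrable_def
proof (rule Bochner_Integration.integrable_bound)
  let ?C = "C_norm del gam"
  show "integrable lborel (\<lambda>u. ?C * (indicator {0<..1} u * u powr (-1/2) + indicator {0<..} u * H_unnorm gam del u))"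
    using powr_set_integrable_Ioc[of "-1/2" 1] H_unnorm_set_integrable[OF assms]
    by (simp add: set_integrable_def)
  show "AE u in lborel. norm (indicator {0<..} u *\<^sub>R (normal_dens z u * H_dens gam del u))
      \<le> norm (?C * (indicator {0<..1} u * u powr (-1/2) + indicator {0<..} u * H_unnorm gam del u))"
  proof (rule AE_I2)
    fix u :: real
    have "normal_dens z u * H_unnorm gam del u \<le> indicator {0<..1} u * u powr (-1/2) + H_unnorm gam del u"
      if "u > 0"
    proof (cases "u \<le> 1")
      case True
      have "normal_dens z u * H_unnorm gam del u \<le> u powr (-1/2) * 1"
        using that normal_dens_le_powr[OF that, of z] H_unnorm_le_1[of u gam del] assms
          normal_dens_pos[OF that, of z] H_unnorm_pos[OF that, of gam del]
        by (intro mult_mono) auto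
      then show ?thesis
        using True that H_unnorm_pos[OF that, of gam del] by (simp add: indicator_def)
    next
      case False
      have "u powr (-1/2) \<le> u powr 0"
        using False by (intro powr_mono) auto
      then have "normal_dens z u * H_unnorm gam del u \<le> 1 * H_unnorm gam del u"
        using that normal_dens_le_powr[OF that, of z] H_unnorm_pos[OF that, of gam del]
        by (intro mult_right_mono) auto
      then show ?thesis
        using False by (simp add: indicator_def)
    qed
    then show "norm (indicator {0<..} u *\<^sub>R (normal_dens z u * H_dens gam del u))
      \<le> norm (?C * (indicator {0<..1} u * u powr (-1/2) + indicator {0<..} u * H_unnorm gam del u))"
      using C_norm_pos[OF assms] normal_dens_pos[of u z] H_unnorm_pos[of u gam del]
      by (auto simp: H_dens_def indicator_def abs_mult)
  qed
qed (unfold normal_dens_def H_dens_def H_unnorm_def, measurable)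

lemma f1_pos:
  assumes "gam > 0" "del \<ge> 0"
  shows "f1 gam del z > 0"
  unfolding f1_def set_lebesgue_integral_def
  using f1_integrand_set_integrable[OF assms, of z] C_norm_pos[OF assms]
  by (intro lborel_integral_pos[where a=0 and b=1])
    (auto simp: set_integrable_def indicator_def H_dens_def normal_dens_pos H_unnorm_pos less_imp_le)

lemma fmix_pos:
  assumes "gam > 0" "del \<ge> 0" "0 < s" "s \<le> 1"
  shows "fmix s gam del z > 0"
  unfolding fmix_def f0_def
  using f1_pos[OF assms(1,2), of z] normal_dens_pos[of 1 z] assms(3,4)
  by (intro add_nonneg_pos) auto

section \<open>Tail asymptotics of the mixture density\<close>

definition tail_rate :: "real \<Rightarrow> real \<Rightarrow> real \<Rightarrow> real" where
  "tail_rate gam del r = \<bar>r\<bar> powr (-1 - 2 * del) * (1 + ln (1 + r^2)) powr (-1 - gam)"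

text \<open>The integrand of \<open>f1 gam del r / tail_rate gam del r\<close> after substituting \<open>u = r\<^sup>2 t\<close>.\<close>

definition rescaled_f1_integrand :: "real \<Rightarrow> real \<Rightarrow> real \<Rightarrow> real \<Rightarrow> real" where
  "rescaled_f1_integrand gam del r t = indicator {0<..} t * (C_norm del gam * normal_dens 1 t *
     ((r^2 / (1 + r^2 * t)) powr (1 + del) * ((1 + ln (1 + r^2)) / (1 + ln (1 + r^2 * t))) powr (1 + gam)))"

definition f1_tail_kernel :: "real \<Rightarrow> real \<Rightarrow> real \<Rightarrow> real" where
  "f1_tail_kernel gam del t = indicator {0<..} t * (C_norm del gam * normal_dens 1 t * t powr (-1 - del))"

lemma normal_dens_rescale:
  assumes "r > 0" "t > 0"
  shows "normal_dens r (r^2 * t) = normal_dens 1 t / r"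
proof -
  have "sqrt (2 * pi * (r^2 * t)) = r * sqrt (2 * pi * t)"
    using assms by (simp add: real_sqrt_mult mult.left_commute)
  moreover have "- (r^2) / (2 * (r^2 * t)) = - (1^2) / (2 * t)"
    using assms by (simp add: field_simps)
  ultimately show ?thesis
    by (simp add: normal_dens_def)
qed

lemma rescaled_f1_integrand_eq:
  assumes "r > 0" "t > 0"
  shows "rescaled_f1_integrand gam del r t
    = r^2 * (normal_dens r (r^2 * t) * H_dens gam del (r^2 * t)) / tail_rate gam del r"
proof -
  define A La Lr where "A = 1 + r^2 * t" and "La = 1 + ln (1 + r^2 * t)" and "Lr = 1 + ln (1 + r^2)"
  have pos: "A > 0" "La > 0" "Lr > 0"
    using assms by (auto simp: A_def La_def Lr_def intro: add_pos_nonneg)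
  have "(r^2) powr (1 + del) = (r powr 2) powr (1 + del)"
    using assms by simp
  also have "\<dots> = r powr (1 + (1 + 2 * del))"
    by (simp add: powr_powr algebra_simps)
  also have "\<dots> = r * r powr (1 + 2 * del)"
    using assms by (simp only: powr_add powr_one)
  finally have r2: "(r^2) powr (1 + del) = r * r powr (1 + 2 * del)" .
  have "rescaled_f1_integrand gam del r t
      = C_norm del gam * normal_dens 1 t * ((r^2 / A) powr (1 + del) * (Lr / La) powr (1 + gam))"
    using assms by (simp add: rescaled_f1_integrand_def A_def La_def Lr_def)
  also have "\<dots> = r^2 * (normal_dens 1 t / r * (C_norm del gam * (A powr (-1 - del) * La powr (-1 - gam))))
      / (r powr (-1 - 2 * del) * Lr powr (-1 - gam))"
    using assms pos r2 by (simp add: powr_minus_one_diff powr_divide field_simps power2_eq_square)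
  also have "\<dots> = r^2 * (normal_dens r (r^2 * t) * H_dens gam del (r^2 * t)) / tail_rate gam del r"
    using assms by (simp add: normal_dens_rescale H_dens_def H_unnorm_def tail_rate_def A_def La_def Lr_def)
  finally show ?thesis .
qed

lemma f1_div_tail_rate_eq:
  assumes "r > 0"
  shows "f1 gam del r / tail_rate gam del r = integral\<^sup>L lborel (rescaled_f1_integrand gam del r)"
proof -
  define F where "F u = indicator {0<..} u * (normal_dens r u * H_dens gam del u)" for u
  have "f1 gam del r = integral\<^sup>L lborel F"
    unfolding f1_def set_lebesgue_integral_def F_def by simp
  also have "\<dots> = r^2 * integral\<^sup>L lborel (\<lambda>t. F (r^2 * t))"
    using lborel_integral_real_affine[of "r^2" F 0] assms by simp
  finally have "f1 gam del r / tail_rate gam del r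
      = integral\<^sup>L lborel (\<lambda>t. r^2 * F (r^2 * t) / tail_rate gam del r)"
    by simp
  also have "\<dots> = integral\<^sup>L lborel (rescaled_f1_integrand gam del r)"
  proof (intro Bochner_Integration.integral_cong refl)
    fix t :: real
    show "r^2 * F (r^2 * t) / tail_rate gam del r = rescaled_f1_integrand gam del r t"
    proof (cases "t > 0")
      case True
      then show ?thesis
        using rescaled_f1_integrand_eq[OF assms True] assms by (simp add: F_def)
    next
      case False
      then show ?thesis
        using assms by (simp add: F_def rescaled_f1_integrand_def zero_less_mult_iff)
    qed
  qed
  finally show ?thesis .
qed

lemma rescaled_f1_integrand_tendsto:
  "((\<lambda>r. rescaled_f1_integrand gam del r t) \<longlongrightarrow> f1_tail_kernel gam del t) at_top"
proof (cases "t > 0")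
  case True
  then have "((\<lambda>r. (r^2 / (1 + r^2 * t)) powr (1 + del) * ((1 + ln (1 + r^2)) / (1 + ln (1 + r^2 * t))) powr (1 + gam))
      \<longlongrightarrow> inverse t powr (1 + del)) at_top"
    by real_asymp
  moreover have "inverse t powr (1 + del) = t powr (-1 - del)"
    using powr_minus[of t "1 + del"] by (simp add: inverse_powr)
  ultimately show ?thesis
    unfolding rescaled_f1_integrand_def f1_tail_kernel_def by (intro tendsto_intros) simp
qed (simp add: rescaled_f1_integrand_def f1_tail_kernel_def)

lemma log_ratio_le:
  fixes a t :: real
  assumes "a \<ge> 0" "t > 0"
  shows "(1 + ln (1 + a)) / (1 + ln (1 + a * t)) \<le> max 1 (1 / t)"
proof -
  have L: "1 \<le> 1 + ln (1 + a * t)"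
    using assms by simp
  have "1 + ln (1 + a) \<le> (1 + ln (1 + a * t)) * max 1 (1 / t)"
  proof (cases "t < 1")
    case True
    have "1 + a \<le> (1 + a * t) / t"
      using assms True by (simp add: field_simps)
    then have "ln (1 + a) \<le> ln ((1 + a * t) / t)"
      using assms by (subst ln_le_cancel_iff) (auto intro: add_pos_nonneg)
    also have "\<dots> = ln (1 + a * t) + ln (1 / t)"
      using assms add_pos_nonneg[of 1 "a * t"] by (simp add: ln_div)
    also have "ln (1 / t) \<le> (1 / t - 1) * (1 + ln (1 + a * t))"
    proof -
      have "(1 / t - 1) * 1 \<le> (1 / t - 1) * (1 + ln (1 + a * t))"
        using L assms True by (intro mult_left_mono) auto
      then show ?thesis
        using ln_le_minus_one[of "1 / t"] assms by simp
    qed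
    finally show ?thesis
      using True assms by (simp add: algebra_simps)
  next
    case False
    then have "a \<le> a * t"
      using mult_left_mono[of 1 t a] assms by simp
    then have "ln (1 + a) \<le> ln (1 + a * t)"
      using assms by (subst ln_le_cancel_iff) auto
    then show ?thesis
      using False assms by simp
  qed
  then show ?thesis
    using L by (simp add: divide_le_eq mult.commute)
qed

lemma rescaled_f1_integrand_bound:
  assumes "gam > 0" "del \<ge> 0"
  shows "\<bar>rescaled_f1_integrand gam del r t\<bar>
    \<le> indicator {0<..} t * (C_norm del gam * normal_dens 1 t * (t powr (-1 - del) + t powr (-2 - del - gam)))"
proof (cases "t > 0")
  case True
  have "0 < 1 + r^2 * t"
    using True by (simp add: add_pos_nonneg)
  then have "r^2 / (1 + r^2 * t) \<le> 1 / t"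
    using True by (simp add: field_simps)
  then have X: "(r^2 / (1 + r^2 * t)) powr (1 + del) \<le> t powr (-1 - del)"
    using powr_mono2[of "1 + del" "r^2 / (1 + r^2 * t)" "1 / t"] True assms
    by (simp add: powr_minus_divide[of t "1 + del", simplified] powr_divide)
  have Y: "((1 + ln (1 + r^2)) / (1 + ln (1 + r^2 * t))) powr (1 + gam) \<le> 1 + t powr (-1 - gam)"
  proof -
    have "((1 + ln (1 + r^2)) / (1 + ln (1 + r^2 * t))) powr (1 + gam) \<le> max 1 (1 / t) powr (1 + gam)"
      using log_ratio_le[of "r^2" t] True assms by (intro powr_mono2) (auto intro: add_pos_nonneg)
    also have "\<dots> \<le> 1 + t powr (-1 - gam)"
      using True powr_minus_divide[of t "1 + gam"] by (auto simp: max_def powr_divide)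
    finally show ?thesis .
  qed
  have "(r^2 / (1 + r^2 * t)) powr (1 + del) * ((1 + ln (1 + r^2)) / (1 + ln (1 + r^2 * t))) powr (1 + gam)
      \<le> t powr (-1 - del) * (1 + t powr (-1 - gam))"
    using X Y by (intro mult_mono) auto
  also have "\<dots> = t powr (-1 - del) + t powr (-1 - del + (-1 - gam))"
    by (simp only: distrib_left mult_1_right powr_add)
  also have "-1 - del + (-1 - gam) = -2 - del - gam"
    by simp
  finally show ?thesis
    using True C_norm_pos[OF assms] normal_dens_pos[OF True, of 1]
    by (simp add: rescaled_f1_integrand_def abs_mult mult_left_mono)
qed (simp add: rescaled_f1_integrand_def)

lemma normal_dens_powr_set_integrable:
  assumes "q > 1/2"
  shows "set_integrable lborel {0<..} (\<lambda>t. normal_dens 1 t * t powr (-q))"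
proof -
  have "((\<lambda>t. normal_dens 1 t * t powr (-q)) \<longlongrightarrow> 0) (at_right 0)"
    unfolding normal_dens_def by real_asymp
  then have "eventually (\<lambda>t. normal_dens 1 t * t powr (-q) < 1) (at_right 0)"
    by (rule order_tendstoD) simp
  then obtain b where b: "b > 0" "\<And>t. 0 < t \<Longrightarrow> t < b \<Longrightarrow> normal_dens 1 t * t powr (-q) < 1"
    unfolding eventually_at_right_field by auto
  have tail: "normal_dens 1 t * t powr (-q) \<le> t powr (-1/2 - q)" if "t > 0" for t
    using mult_right_mono[OF normal_dens_le_powr[OF that], of "t powr (-q)"] powr_add[of t "-1/2" "-q"]
    by simp
  define M where "M = max 1 (b powr (-1/2 - q))"
  have near0: "normal_dens 1 t * t powr (-q) \<le> M" if "t > 0" for t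
  proof (cases "t < b")
    case False
    then have "t powr (-1/2 - q) \<le> b powr (-1/2 - q)"
      using b assms by (intro powr_mono2') auto
    then show ?thesis
      using tail[OF that] by (simp add: M_def)
  qed (use b that in \<open>force simp: M_def\<close>)
  have "integrable lborel (\<lambda>t. M * indicator {0<..1} t + indicator {1..} t * t powr (-1/2 - q))"
    using powr_set_integrable_atLeast[of "-1/2 - q" 1] assms by (simp add: set_integrable_def)
  then show ?thesis
    unfolding set_integrable_def
  proof (rule Bochner_Integration.integrable_bound)
    show "AE t in lborel. norm (indicator {0<..} t *\<^sub>R (normal_dens 1 t * t powr (-q)))
        \<le> norm (M * indicator {0<..1} t + indicator {1..} t * t powr (-1/2 - q))"
    proof (rule AE_I2)
      fix t :: real
      show "norm (indicator {0<..} t *\<^sub>R (normal_dens 1 t * t powr (-q)))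
          \<le> norm (M * indicator {0<..1} t + indicator {1..} t * t powr (-1/2 - q))"
      proof (cases "t > 0")
        case True
        have "0 \<le> normal_dens 1 t * t powr (-q)"
          using normal_dens_pos[OF True, of 1] by simp
        then show ?thesis
          using near0[OF True] tail[OF True] True by (auto simp: indicator_def M_def)
      qed simp
    qed
  qed (unfold normal_dens_def, measurable)
qed

lemma f1_tail_kernel_integrable:
  assumes "del \<ge> 0"
  shows "integrable lborel (f1_tail_kernel gam del)"
  using set_integrable_mult_right[OF normal_dens_powr_set_integrable[of "1 + del"], of "C_norm del gam"] assms
  by (simp add: f1_tail_kernel_def[abs_def] set_integrable_def mult.assoc)

lemma f1_tail_kernel_integral_pos:
  assumes "gam > 0" "del \<ge> 0"
  shows "integral\<^sup>L lborel (f1_tail_kernel gam del) > 0"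
proof (rule lborel_integral_pos[where a=0 and b=1])
  have "0 < C_norm del gam * normal_dens 1 t * t powr (-1 - del)" if "t > 0" for t
    using C_norm_pos[OF assms] normal_dens_pos[OF that, of 1] that by simp
  then show "0 \<le> f1_tail_kernel gam del t" "0 < t \<Longrightarrow> t < 1 \<Longrightarrow> 0 < f1_tail_kernel gam del t" for t
    by (auto simp: f1_tail_kernel_def indicator_def less_imp_le)
qed (use f1_tail_kernel_integrable[OF assms(2)] in auto)

lemma f1_tail_tendsto:
  assumes "gam > 0" "del \<ge> 0"
  shows "((\<lambda>r. f1 gam del r / tail_rate gam del r) \<longlongrightarrow> integral\<^sup>L lborel (f1_tail_kernel gam del)) at_top"
proof -
  define w where "w = (\<lambda>t. indicator {0<..} t * (C_norm del gam * normal_dens 1 t * (t powr (-1 - del) + t powr (-2 - del - gam))))"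
  have "set_integrable lborel {0<..} (\<lambda>t. C_norm del gam * (normal_dens 1 t * t powr (-1 - del))
      + C_norm del gam * (normal_dens 1 t * t powr (-2 - del - gam)))"
    using normal_dens_powr_set_integrable[of "1 + del"] normal_dens_powr_set_integrable[of "2 + del + gam"] assms
    by (intro set_integral_add set_integrable_mult_right) auto
  then have "integrable lborel w"
    by (simp add: w_def set_integrable_def distrib_left mult.assoc)
  then have "((\<lambda>r. integral\<^sup>L lborel (rescaled_f1_integrand gam del r)) \<longlongrightarrow> integral\<^sup>L lborel (f1_tail_kernel gam del)) at_top"
  proof (rule integral_dominated_convergence_at_top[where w=w, rotated 2])
    show "f1_tail_kernel gam del \<in> borel_measurable lborel"
      unfolding f1_tail_kernel_def[abs_def] normal_dens_def by measurable
    show "rescaled_f1_integrand gam del r \<in> borel_measurable lborel" for r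
      unfolding rescaled_f1_integrand_def[abs_def] normal_dens_def by measurable
    show "AE t in lborel. ((\<lambda>r. rescaled_f1_integrand gam del r t) \<longlongrightarrow> f1_tail_kernel gam del t) at_top"
      using rescaled_f1_integrand_tendsto by simp
    show "\<forall>\<^sub>F r in at_top. AE t in lborel. norm (rescaled_f1_integrand gam del r t) \<le> w t"
      using rescaled_f1_integrand_bound[OF assms] by (simp add: w_def)
  qed
  moreover have "\<forall>\<^sub>F r in at_top. integral\<^sup>L lborel (rescaled_f1_integrand gam del r) = f1 gam del r / tail_rate gam del r"
    using eventually_gt_at_top[of 0] by eventually_elim (simp add: f1_div_tail_rate_eq)
  ultimately show ?thesis
    using tendsto_cong by fastforce
qed

lemma f0_tail_tendsto: "((\<lambda>r. f0 r / tail_rate gam del r) \<longlongrightarrow> 0) at_top"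
proof -
  have "((\<lambda>r. exp (- (r^2) / (2 * 1)) / sqrt (2 * pi * 1) / (r powr (-1 - 2 * del) * (1 + ln (1 + r^2)) powr (-1 - gam))) \<longlongrightarrow> 0) at_top"
    by real_asymp
  moreover have "\<forall>\<^sub>F r in at_top. exp (- (r^2) / (2 * 1)) / sqrt (2 * pi * 1) / (r powr (-1 - 2 * del) * (1 + ln (1 + r^2)) powr (-1 - gam))
      = f0 r / tail_rate gam del r"
    using eventually_gt_at_top[of 0] by eventually_elim (simp add: f0_def normal_dens_def tail_rate_def)
  ultimately show ?thesis
    using tendsto_cong by fastforce
qed

lemma fmix_tail_tendsto:
  assumes "gam > 0" "del \<ge> 0"
  shows "((\<lambda>r. fmix s gam del r / tail_rate gam del r) \<longlongrightarrow> s * integral\<^sup>L lborel (f1_tail_kernel gam del)) at_top"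
proof -
  have "((\<lambda>r. (1 - s) * (f0 r / tail_rate gam del r) + s * (f1 gam del r / tail_rate gam del r))
      \<longlongrightarrow> (1 - s) * 0 + s * integral\<^sup>L lborel (f1_tail_kernel gam del)) at_top"
    by (intro tendsto_intros f0_tail_tendsto f1_tail_tendsto assms)
  then show ?thesis
    by (simp add: fmix_def add_divide_distrib)
qed

lemma fmix_abs: "fmix s gam del \<bar>z\<bar> = fmix s gam del z"
  by (simp add: fmix_def f0_def f1_def normal_dens_def)

lemma tail_rate_pos: "z \<noteq> 0 \<Longrightarrow> tail_rate gam del z > 0"
  using add_pos_nonneg[of 1 "ln (1 + z^2)"] by (simp add: tail_rate_def)

lemma fmix_tail_tendsto_abs:
  assumes "gam > 0" "del \<ge> 0" "filterlim (\<lambda>x. \<bar>z x\<bar>) at_top F"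
  shows "((\<lambda>x. fmix s gam del (z x) / tail_rate gam del (z x)) \<longlongrightarrow> s * integral\<^sup>L lborel (f1_tail_kernel gam del)) F"
  using filterlim_compose[OF fmix_tail_tendsto[OF assms(1,2)] assms(3)]
  by (simp add: fmix_abs tail_rate_def)

section \<open>Shifted and rescaled large arguments\<close>

lemma tail_rate_shift_scale_eq:
  assumes "\<sigma> > 0" "z \<noteq> 0" "z - a \<noteq> 0"
  shows "(1 / \<sigma>) * tail_rate gam del ((z - a) / \<sigma>) / tail_rate gam del z
    = \<sigma> powr (2 * del) * (\<bar>z - a\<bar> / \<bar>z\<bar>) powr (-1 - 2 * del)
      * ((1 + ln (1 + z^2)) / (1 + ln (1 + ((z - a) / \<sigma>)^2))) powr (1 + gam)"
proof -
  have "\<sigma> powr (1 + 2 * del) = \<sigma> * \<sigma> powr (2 * del)"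
    using assms by (simp add: powr_add)
  moreover have "0 < 1 + ln (1 + z^2)" "0 < 1 + ln (1 + ((z - a) / \<sigma>)^2)"
    by (auto intro: add_pos_nonneg)
  ultimately show ?thesis
    using assms by (simp add: tail_rate_def powr_minus_one_diff powr_divide field_simps)
qed

lemma log_ratio_tendsto:
  fixes z t :: "'a \<Rightarrow> real"
  assumes "filterlim (\<lambda>x. \<bar>z x\<bar>) at_top F" "0 < c" "0 < C"
    and "eventually (\<lambda>x. c * (z x)^2 \<le> (t x)^2 \<and> (t x)^2 \<le> C * (z x)^2) F"
  shows "((\<lambda>x. (1 + ln (1 + (z x)^2)) / (1 + ln (1 + (t x)^2))) \<longlongrightarrow> 1) F"
proof -
  have lim: "((\<lambda>x. (1 + ln (1 + k * (z x)^2)) / (1 + ln (1 + (z x)^2))) \<longlongrightarrow> 1) F" if "k > 0" for k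
  proof -
    have "((\<lambda>r. (1 + ln (1 + k * r^2)) / (1 + ln (1 + r^2))) \<longlongrightarrow> 1) at_top"
      using that by real_asymp
    from filterlim_compose[OF this assms(1)] show ?thesis by simp
  qed
  have mono: "(1 + ln (1 + u)) / (1 + ln (1 + (z x)^2)) \<le> (1 + ln (1 + v)) / (1 + ln (1 + (z x)^2))"
    if "0 \<le> u" "u \<le> v" for u v x
    using that add_pos_nonneg[of 1 "ln (1 + (z x)^2)"] by (intro divide_right_mono) auto
  have "((\<lambda>x. (1 + ln (1 + (t x)^2)) / (1 + ln (1 + (z x)^2))) \<longlongrightarrow> 1) F"
  proof (rule tendsto_sandwich[OF _ _ lim[OF assms(2)] lim[OF assms(3)]])
    show "\<forall>\<^sub>F x in F. (1 + ln (1 + c * (z x)^2)) / (1 + ln (1 + (z x)^2))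
        \<le> (1 + ln (1 + (t x)^2)) / (1 + ln (1 + (z x)^2))"
      using assms(4) by eventually_elim (use assms(2) in \<open>auto intro: mono\<close>)
    show "\<forall>\<^sub>F x in F. (1 + ln (1 + (t x)^2)) / (1 + ln (1 + (z x)^2))
        \<le> (1 + ln (1 + C * (z x)^2)) / (1 + ln (1 + (z x)^2))"
      using assms(4) by eventually_elim (auto intro: mono)
  qed
  from tendsto_inverse[OF this] show ?thesis
    by simp
qed

lemma shift_ratio_tendsto:
  fixes z a :: "'a \<Rightarrow> real"
  assumes "filterlim (\<lambda>x. \<bar>z x\<bar>) at_top F" "eventually (\<lambda>x. \<bar>a x\<bar> \<le> A) F"
  shows "((\<lambda>x. \<bar>z x - a x\<bar> / \<bar>z x\<bar>) \<longlongrightarrow> 1) F"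
proof -
  have "((\<lambda>x. a x / z x) \<longlongrightarrow> 0) F"
  proof (rule tendsto_0_le[OF tendsto_inverse_0_at_top[OF assms(1)], of _ A])
    show "\<forall>\<^sub>F x in F. norm (a x / z x) \<le> norm (inverse \<bar>z x\<bar>) * A"
      using assms(2) by eventually_elim (simp add: divide_inverse_commute abs_mult mult_left_mono)
  qed
  then have "((\<lambda>x. \<bar>1 - a x / z x\<bar>) \<longlongrightarrow> \<bar>1 - 0\<bar>) F"
    by (intro tendsto_rabs tendsto_diff tendsto_const)
  moreover have "\<forall>\<^sub>F x in F. \<bar>1 - a x / z x\<bar> = \<bar>z x - a x\<bar> / \<bar>z x\<bar>"
    using assms(1) unfolding filterlim_at_top_dense
    by (rule allE[of _ 0], elim eventually_mono) (simp add: diff_divide_distrib flip: abs_divide)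
  ultimately show ?thesis
    using tendsto_cong by fastforce
qed

lemma shift_scale_comparable:
  fixes z a \<sigma> :: "'a \<Rightarrow> real"
  assumes "filterlim (\<lambda>x. \<bar>z x\<bar>) at_top F" "eventually (\<lambda>x. \<bar>a x\<bar> \<le> A \<and> s0 \<le> \<sigma> x \<and> \<sigma> x \<le> s1) F"
    and "0 < s0"
  shows "eventually (\<lambda>x. (z x)^2 / (4 * s1^2) \<le> ((z x - a x) / \<sigma> x)^2
      \<and> ((z x - a x) / \<sigma> x)^2 \<le> 4 / s0^2 * (z x)^2) F"
proof -
  have "eventually (\<lambda>x. 2 * A \<le> \<bar>z x\<bar>) F"
    using assms(1) by (simp add: filterlim_at_top)
  with assms(2) show ?thesis
  proof eventually_elim
    case (elim x)
    then have "\<bar>z x\<bar> / 2 \<le> \<bar>z x - a x\<bar>" "\<bar>z x - a x\<bar> \<le> 2 * \<bar>z x\<bar>"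
      by linarith+
    then have "(\<bar>z x\<bar> / 2)^2 \<le> \<bar>z x - a x\<bar>^2" "\<bar>z x - a x\<bar>^2 \<le> (2 * \<bar>z x\<bar>)^2"
      using power_mono[of "\<bar>z x\<bar> / 2" "\<bar>z x - a x\<bar>" 2] power_mono[of "\<bar>z x - a x\<bar>" "2 * \<bar>z x\<bar>" 2]
      by simp_all
    moreover have "(\<sigma> x)^2 \<le> s1^2" "s0^2 \<le> (\<sigma> x)^2"
      using elim assms(3) by (auto intro: power_mono)
    moreover have "0 < (\<sigma> x)^2"
      using elim assms(3) by simp
    ultimately have "(\<bar>z x\<bar> / 2)^2 / s1^2 \<le> \<bar>z x - a x\<bar>^2 / (\<sigma> x)^2"
        "\<bar>z x - a x\<bar>^2 / (\<sigma> x)^2 \<le> (2 * \<bar>z x\<bar>)^2 / s0^2"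
      using assms(3) by (auto intro!: frac_le)
    then show ?case
      by (simp add: power_divide power_mult_distrib)
  qed
qed

lemma filterlim_abs_at_top_of_square_ge:
  fixes z t :: "'a \<Rightarrow> real"
  assumes "filterlim (\<lambda>x. \<bar>z x\<bar>) at_top F" "0 < c" "eventually (\<lambda>x. c * (z x)^2 \<le> (t x)^2) F"
  shows "filterlim (\<lambda>x. \<bar>t x\<bar>) at_top F"
proof (rule filterlim_at_top_mono[OF filterlim_tendsto_pos_mult_at_top[OF tendsto_const _ assms(1)]])
  show "0 < sqrt c"
    using assms(2) by simp
  show "\<forall>\<^sub>F x in F. sqrt c * \<bar>z x\<bar> \<le> \<bar>t x\<bar>"
    using assms(3)
  proof eventually_elim
    case (elim x)
    then have "\<bar>sqrt c * z x\<bar> \<le> \<bar>t x\<bar>"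
      unfolding abs_le_square_iff using assms(2) by (simp add: power_mult_distrib)
    then show ?case
      using assms(2) by (simp add: abs_mult)
  qed
qed

lemma fmix_shift_scale_eq:
  assumes "gam > 0" "del \<ge> 0" "0 < s" "s \<le> 1" "\<sigma> > 0" "z \<noteq> 0" "z - a \<noteq> 0"
  shows "(1 / \<sigma>) * fmix s gam del ((z - a) / \<sigma>) / fmix s gam del z / \<sigma> powr (2 * del)
    = (\<bar>z - a\<bar> / \<bar>z\<bar>) powr (-1 - 2 * del) * ((1 + ln (1 + z^2)) / (1 + ln (1 + ((z - a) / \<sigma>)^2))) powr (1 + gam)
      * ((fmix s gam del ((z - a) / \<sigma>) / tail_rate gam del ((z - a) / \<sigma>))
        / (fmix s gam del z / tail_rate gam del z))"
proof -
  have alg: "(1 / r) * Ft / Fz / p = S * ((Ft / Tt) / (Fz / Tz))"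
    if "(1 / r) * Tt / Tz = p * S" "0 < Fz" "0 < Tt" "0 < Tz" "0 < p" "0 < r" for S Ft Fz Tt Tz p r :: real
    using that by (auto simp: field_simps)
  have "(z - a) / \<sigma> \<noteq> 0"
    using assms(5,7) by simp
  then show ?thesis
    using assms(5-7)
    by (intro alg tail_rate_shift_scale_eq[unfolded mult.assoc] fmix_pos[OF assms(1-4)] tail_rate_pos) auto
qed

lemma fmix_shift_scale_tendsto:
  fixes z a \<sigma> :: "'a \<Rightarrow> real"
  assumes "gam > 0" "del \<ge> 0" "0 < s" "s \<le> 1"
    and z: "filterlim (\<lambda>x. \<bar>z x\<bar>) at_top F"
    and bounds: "eventually (\<lambda>x. \<bar>a x\<bar> \<le> A \<and> s0 \<le> \<sigma> x \<and> \<sigma> x \<le> s1) F"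
    and "0 < s0" "s0 \<le> s1"
  shows "((\<lambda>x. (1 / \<sigma> x) * fmix s gam del ((z x - a x) / \<sigma> x) / fmix s gam del (z x) / \<sigma> x powr (2 * del))
    \<longlongrightarrow> 1) F"
proof -
  define t where "t x = (z x - a x) / \<sigma> x" for x
  define h where "h w = fmix s gam del w / tail_rate gam del w" for w
  define L where "L = s * integral\<^sup>L lborel (f1_tail_kernel gam del)"
  have "L > 0"
    using f1_tail_kernel_integral_pos[OF assms(1,2)] assms(3) by (simp add: L_def)
  have c: "0 < 1 / (4 * s1^2)" "0 < 4 / s0^2"
    using assms(7,8) by auto
  have comparable: "eventually (\<lambda>x. 1 / (4 * s1^2) * (z x)^2 \<le> (t x)^2 \<and> (t x)^2 \<le> 4 / s0^2 * (z x)^2) F"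
    using shift_scale_comparable[OF z bounds \<open>0 < s0\<close>] by (simp add: t_def)
  then have t: "filterlim (\<lambda>x. \<bar>t x\<bar>) at_top F"
    by (intro filterlim_abs_at_top_of_square_ge[OF z c(1)]) (auto elim: eventually_mono)
  have "((\<lambda>x. (\<bar>z x - a x\<bar> / \<bar>z x\<bar>) powr (-1 - 2 * del)
      * ((1 + ln (1 + (z x)^2)) / (1 + ln (1 + (t x)^2))) powr (1 + gam) * (h (t x) / h (z x)))
      \<longlongrightarrow> 1 powr (-1 - 2 * del) * 1 powr (1 + gam) * (L / L)) F"
    using shift_ratio_tendsto[OF z eventually_mono[OF bounds]] log_ratio_tendsto[OF z c comparable]
      fmix_tail_tendsto_abs[OF assms(1,2) t] fmix_tail_tendsto_abs[OF assms(1,2) z] \<open>L > 0\<close>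
    unfolding h_def L_def by (intro tendsto_mult tendsto_divide tendsto_powr) auto
  moreover have "eventually (\<lambda>x. (\<bar>z x - a x\<bar> / \<bar>z x\<bar>) powr (-1 - 2 * del)
      * ((1 + ln (1 + (z x)^2)) / (1 + ln (1 + (t x)^2))) powr (1 + gam) * (h (t x) / h (z x))
      = (1 / \<sigma> x) * fmix s gam del ((z x - a x) / \<sigma> x) / fmix s gam del (z x) / \<sigma> x powr (2 * del)) F"
    using bounds comparable z[unfolded filterlim_at_top_dense, rule_format, of 0]
  proof eventually_elim
    case (elim x)
    moreover have "0 < 1 / (4 * s1^2) * (z x)^2"
      using c(1) elim by simp
    ultimately have "t x \<noteq> 0"
      by auto
    with elim show ?case
      using assms(7) fmix_shift_scale_eq[OF assms(1-4), of "\<sigma> x" "z x" "a x"] by (simp add: h_def t_def)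
  qed
  ultimately show ?thesis
    using \<open>L > 0\<close> tendsto_cong by fastforce
qed

section \<open>Uniform convergence of the posterior ratio\<close>

lemma uniform_limit_of_tendsto_prod_filter:
  fixes f :: "'a \<Rightarrow> 'b \<Rightarrow> 'c::metric_space"
  assumes "((\<lambda>q. f (fst q) (snd q)) \<longlongrightarrow> c) (F \<times>\<^sub>F principal S)"
  shows "uniform_limit S f (\<lambda>_. c) F"
proof (rule uniform_limitI)
  fix e :: real
  assume "e > 0"
  with assms have "eventually (\<lambda>q. dist (f (fst q) (snd q)) c < e) (F \<times>\<^sub>F principal S)"
    by (rule tendstoD)
  then obtain P Q where "eventually P F" "eventually Q (principal S)"
    and "\<And>\<omega> p. P \<omega> \<Longrightarrow> Q p \<Longrightarrow> dist (f \<omega> p) c < e"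
    unfolding eventually_prod_filter by auto
  then show "eventually (\<lambda>\<omega>. \<forall>p\<in>S. dist (f \<omega> p) c < e) F"
    by (auto elim!: eventually_mono simp: eventually_principal)
qed

lemma compact_subset_halfspace_bounds:
  fixes K :: "('a::real_normed_vector \<times> real) set"
  assumes "compact K" "K \<subseteq> UNIV \<times> {0<..}"
  obtains s0 s1 B where "0 < s0" "s0 \<le> s1" "\<And>\<beta> \<sigma>. (\<beta>, \<sigma>) \<in> K \<Longrightarrow> s0 \<le> \<sigma> \<and> \<sigma> \<le> s1 \<and> norm \<beta> \<le> B"
proof (cases "K = {}")
  case False
  have snd: "compact (snd ` K)" and fst: "compact (fst ` K)"
    using compact_continuous_image[OF continuous_on_snd[OF continuous_on_id] assms(1)]
      compact_continuous_image[OF continuous_on_fst[OF continuous_on_id] assms(1)] by simp_all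
  obtain s0 where s0: "s0 \<in> snd ` K" "\<forall>\<sigma>\<in>snd ` K. s0 \<le> \<sigma>"
    using compact_attains_inf[OF snd] False by blast
  obtain s1 where s1: "\<forall>\<sigma>\<in>snd ` K. \<bar>\<sigma>\<bar> \<le> s1"
    using compact_imp_bounded[OF snd] unfolding bounded_real by blast
  obtain B where "\<forall>\<beta>\<in>fst ` K. norm \<beta> \<le> B"
    using compact_imp_bounded[OF fst] unfolding bounded_iff by blast
  moreover have "0 < s0" "s0 \<le> s1"
    using s0(1) s1 assms(2) by force+
  ultimately show ?thesis
    using s0(2) s1 by (intro that[of s0 s1 B]) force+
qed (use that[of 1 1] in auto)

lemma fmix_shift_scale_tendsto_prod_filter:
  fixes K :: "('a::real_inner \<times> real) set" and z :: "real \<Rightarrow> real"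
  assumes "gam > 0" "del \<ge> 0" "0 < s" "s \<le> 1"
    and "filterlim (\<lambda>\<omega>. \<bar>z \<omega>\<bar>) at_top at_top" "compact K" "K \<subseteq> UNIV \<times> {0<..}"
  shows "((\<lambda>(\<omega>, \<beta>, \<sigma>). (1 / \<sigma>) * fmix s gam del ((z \<omega> - v \<bullet> \<beta>) / \<sigma>) / fmix s gam del (z \<omega>)
    / \<sigma> powr (2 * del)) \<longlongrightarrow> 1) (at_top \<times>\<^sub>F principal K)"
proof -
  obtain s0 s1 B where "0 < s0" "s0 \<le> s1" and K: "\<And>\<beta> \<sigma>. (\<beta>, \<sigma>) \<in> K \<Longrightarrow> s0 \<le> \<sigma> \<and> \<sigma> \<le> s1 \<and> norm \<beta> \<le> B"
    using compact_subset_halfspace_bounds[OF assms(6,7)] by blast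
  have "eventually (\<lambda>q. snd q \<in> K) (at_top \<times>\<^sub>F principal K)"
    unfolding eventually_prod_filter eventually_principal by (intro exI[of _ "\<lambda>_. True"] exI[of _ "\<lambda>p. p \<in> K"]) auto
  then have "eventually (\<lambda>q. \<bar>v \<bullet> fst (snd q)\<bar> \<le> norm v * B \<and> s0 \<le> snd (snd q) \<and> snd (snd q) \<le> s1)
      (at_top \<times>\<^sub>F principal K)"
  proof eventually_elim
    case (elim q)
    then have "s0 \<le> snd (snd q) \<and> snd (snd q) \<le> s1 \<and> norm (fst (snd q)) \<le> B"
      using K[of "fst (snd q)" "snd (snd q)"] by simp
    moreover have "norm v * norm (fst (snd q)) \<le> norm v * B"
      using calculation by (intro mult_left_mono) auto
    ultimately show ?case
      using Cauchy_Schwarz_ineq2[of v "fst (snd q)"] by linarith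
  qed
  from fmix_shift_scale_tendsto[OF assms(1-4) filterlim_compose[OF assms(5) filterlim_fst] this \<open>0 < s0\<close> \<open>s0 \<le> s1\<close>]
  show ?thesis
    by (simp add: case_prod_beta')
qed

lemma upost_ratio_eq:
  assumes "\<sigma> > 0" "\<And>w. f w > 0" "prior \<beta> \<sigma> > 0"
    and "KI \<union> LI = {1..n}" "KI \<inter> LI = {}"
  shows "upost TYPE('p::finite) f prior x y {1..n} \<beta> \<sigma> / upost TYPE('p) f prior x y KI \<beta> \<sigma>
    = (\<Prod>i\<in>LI. (1 / \<sigma>) * f ((y i - x i \<bullet> \<beta>) / \<sigma>))"
proof -
  define g where "g i = (1 / \<sigma>) * f ((y i - x i \<bullet> \<beta>) / \<sigma>)" for i
  have "finite KI" "finite LI"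
    using assms(4) by (metis finite_Un finite_atLeastAtMost)+
  then have "upost TYPE('p) f prior x y {1..n} \<beta> \<sigma> = prior \<beta> \<sigma> * ((\<Prod>i\<in>KI. g i) * (\<Prod>i\<in>LI. g i))"
    unfolding upost_def g_def[symmetric] assms(4)[symmetric] by (simp add: prod.union_disjoint assms(5))
  moreover have "upost TYPE('p) f prior x y KI \<beta> \<sigma> = prior \<beta> \<sigma> * (\<Prod>i\<in>KI. g i)"
    unfolding upost_def g_def[symmetric] ..
  moreover have "(\<Prod>i\<in>KI. g i) > 0"
    using assms(1,2) by (intro prod_pos) (simp add: g_def)
  ultimately show ?thesis
    using assms(3) by (simp add: g_def)
qed

lemma upost_ratio_div_prod_eq:
  fixes d :: real
  assumes "\<sigma> > 0" "\<And>w. f w > 0" "prior \<beta> \<sigma> > 0"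
    and "KI \<union> LI = {1..n}" "KI \<inter> LI = {}"
  shows "upost TYPE('p::finite) f prior x y {1..n} \<beta> \<sigma> / upost TYPE('p) f prior x y KI \<beta> \<sigma> / (\<Prod>i\<in>LI. f (y i))
    = \<sigma> powr (2 * real (card LI) * d) * (\<Prod>i\<in>LI. (1 / \<sigma>) * f ((y i - x i \<bullet> \<beta>) / \<sigma>) / f (y i) / \<sigma> powr (2 * d))"
proof -
  have scale: "\<sigma> powr (2 * real (card LI) * d) * (\<Prod>i\<in>LI. a i / \<sigma> powr (2 * d)) = (\<Prod>i\<in>LI. a i)"
    for a :: "nat \<Rightarrow> real"
    using assms(1) by (simp add: prod_dividef powr_power mult_ac)
  show ?thesis
    unfolding upost_ratio_eq[where f=f and prior=prior and \<beta>=\<beta>, OF assms]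
      scale[of "\<lambda>i. (1 / \<sigma>) * f ((y i - x i \<bullet> \<beta>) / \<sigma>) / f (y i)"]
    by (rule prod_dividef[symmetric])
qed

theorem theoremS1:
  fixes gam del s :: real and n :: nat
    and KI LI :: "nat set"
    and x :: "nat \<Rightarrow> real^'p"
    and prior :: "real^'p \<Rightarrow> real \<Rightarrow> real"
    and y :: "real \<Rightarrow> nat \<Rightarrow> real"
    and Kc :: "((real^'p) \<times> real) set"
  assumes gam: "gam > 0" and del: "del \<ge> 0" and s: "0 < s" "s \<le> 1"
    and prior_pos: "\<And>\<beta> \<sigma>. \<sigma> > 0 \<Longrightarrow> prior \<beta> \<sigma> > 0"
    and part: "KI \<union> LI = {1..n}" "KI \<inter> LI = {}"
    and constK: "\<And>i. i \<in> KI \<Longrightarrow> \<exists>c. \<forall>\<omega>. y \<omega> i = c"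
    and divL: "\<And>i. i \<in> LI \<Longrightarrow> filterlim (\<lambda>\<omega>. \<bar>y \<omega> i\<bar>) at_top at_top"
    and Kc: "compact Kc" "Kc \<subseteq> UNIV \<times> {0<..}"
  shows "uniform_limit Kc
     (\<lambda>\<omega> (\<beta>, \<sigma>).
        (upost TYPE('p) (fmix s gam del) prior x (y \<omega>) {1..n} \<beta> \<sigma>
          / upost TYPE('p) (fmix s gam del) prior x (y \<omega>) KI \<beta> \<sigma>)
        / (\<Prod>i\<in>LI. fmix s gam del (y \<omega> i)))
     (\<lambda>(\<beta>, \<sigma>). \<sigma> powr (2 * real (card LI) * del))
     at_top"
proof -
  define R where "R i = (\<lambda>(\<omega>, \<beta>, \<sigma>). (1 / \<sigma>) * fmix s gam del ((y \<omega> i - x i \<bullet> \<beta>) / \<sigma>)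
    / fmix s gam del (y \<omega> i) / \<sigma> powr (2 * del))" for i
  define c where "c = 2 * real (card LI) * del"
  have "((\<lambda>q. \<Prod>i\<in>LI. R i q) \<longlongrightarrow> 1) (at_top \<times>\<^sub>F principal Kc)"
    using tendsto_prod[of LI R "\<lambda>_. 1"] fmix_shift_scale_tendsto_prod_filter[OF gam del s divL Kc]
    by (simp add: R_def)
  then have "uniform_limit Kc (\<lambda>\<omega> p. \<Prod>i\<in>LI. R i (\<omega>, p)) (\<lambda>_. 1) at_top"
    by (intro uniform_limit_of_tendsto_prod_filter) simp
  moreover have "bounded ((\<lambda>p. snd p powr c) ` Kc)"
    using Kc by (intro compact_imp_bounded compact_continuous_image continuous_intros) auto
  ultimately have "uniform_limit Kc (\<lambda>\<omega> p. snd p powr c * (\<Prod>i\<in>LI. R i (\<omega>, p))) (\<lambda>p. snd p powr c * 1) at_top"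
    by (intro uniform_lim_mult uniform_limit_const) (auto intro: bounded_subset[of "{1}"])
  then show ?thesis
  proof (rule uniform_limit_cong'[THEN iffD1, rotated 2])
    fix \<omega> p
    assume "p \<in> Kc"
    then obtain \<beta> \<sigma> where p: "p = (\<beta>, \<sigma>)" and "\<sigma> > 0"
      using Kc(2) by auto
    show "snd p powr c * (\<Prod>i\<in>LI. R i (\<omega>, p)) = (case p of (\<beta>, \<sigma>) \<Rightarrow>
        upost TYPE('p) (fmix s gam del) prior x (y \<omega>) {1..n} \<beta> \<sigma> / upost TYPE('p) (fmix s gam del) prior x (y \<omega>) KI \<beta> \<sigma>
        / (\<Prod>i\<in>LI. fmix s gam del (y \<omega> i)))"
      using upost_ratio_div_prod_eq[where f="fmix s gam del" and prior=prior and \<beta>=\<beta> and x=x and y="y \<omega>" and d=del,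
          OF \<open>\<sigma> > 0\<close> fmix_pos[OF gam del s] prior_pos[OF \<open>\<sigma> > 0\<close>] part, symmetric]
      by (simp only: p R_def c_def prod.case snd_conv)
  qed (simp add: c_def case_prod_beta)
qed

end
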